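(* Let $G$ be a locally compact group, $K$ a compact subgroup with normalized Haar measure $dk$, and $\mu:G\to\mathbb{C}\setminus\{0\}$ a continuous character. Let $f\in\mathcal{C}(G)$, $f\neq0$, satisfy $$\int_K f(xkyk^{-1})\,dk+\mu(y)\int_K f(xky^{-1}k^{-1})\,dk=2f(x)f(y)\quad\text{for all } x,y\in G.$$ Then: (i) $f(e)=1$; (ii) $f$ is $K$-central; (iii) $f(x)=\mu(x)f(x^{-1})$ for all $x\in G$; (iv) $\int_K f(xkyk^{-1})\,dk=\int_K f(ykxk^{-1})\,dk$ for all $x,y\in G$; (v) for every $x\in G$, the function $f_x(y)=\int_Kf(xkyk^{-1})\,dk-f(x)f(y)$ satisfies $$\int_K f_x(ykzk^{-1})\,dk+\int_K f_x(zkyk^{-1})\,dk=2f_x(y)f(z)+2f_x(z)f(y)\quad\text{for all } y,z\in G.$$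
   Context: $\mathcal{C}(G)$ is the space of complex continuous functions on $G$; $e$ is the identity. A function $f$ on $G$ is $K$-central if $f(kx)=f(xk)$ for all $k\in K$, $x\in G$. A character of $G$ is a homomorphism $G\to\mathbb{C}\setminus\{0\}$. *)

theory Defs
  imports "HOL-Probability.Probability" "HOL-Algebra.Group"
begin

definition topological_group :: "('a, 'b) monoid_scheme \<Rightarrow> 'a topology \<Rightarrow> bool" where
  "topological_group G T \<longleftrightarrow> group G \<and> topspace T = carrier G \<and> Hausdorff_space T
     \<and> continuous_map (prod_topology T T) T (\<lambda>p. fst p \<otimes>\<^bsub>G\<^esub> snd p)
     \<and> continuous_map T T (\<lambda>x. inv\<^bsub>G\<^esub> x)"

definition locally_compact_group :: "('a, 'b) monoid_scheme \<Rightarrow> 'a topology \<Rightarrow> bool" where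
  "locally_compact_group G T \<longleftrightarrow> topological_group G T \<and> locally_compact_space T"

definition borel_of_top :: "'a topology \<Rightarrow> 'a measure" where
  "borel_of_top X = sigma (topspace X) {U. openin X U}"

text \<open>Normalized Haar measure on a compact subgroup K of (G,T): a Borel probability
  measure on K (with the subspace topology) that is invariant under left and right
  translations by elements of K and under inversion (all properties enjoyed by the
  normalized Haar measure of a compact group).\<close>
definition normalized_haar :: "('a, 'b) monoid_scheme \<Rightarrow> 'a topology \<Rightarrow> 'a set \<Rightarrow> 'a measure \<Rightarrow> bool" where
  "normalized_haar G T K M \<longleftrightarrow>
     prob_space M \<and> space M = K \<and> sets M = sets (borel_of_top (subtopology T K))
     \<and> (\<forall>k\<in>K. \<forall>A\<in>sets M. (\<lambda>x. k \<otimes>\<^bsub>G\<^esub> x) ` A \<in> sets M \<and> emeasure M ((\<lambda>x. k \<otimes>\<^bsub>G\<^esub> x) ` A) = emeasure M A)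
     \<and> (\<forall>k\<in>K. \<forall>A\<in>sets M. (\<lambda>x. x \<otimes>\<^bsub>G\<^esub> k) ` A \<in> sets M \<and> emeasure M ((\<lambda>x. x \<otimes>\<^bsub>G\<^esub> k) ` A) = emeasure M A)
     \<and> (\<forall>A\<in>sets M. (\<lambda>x. inv\<^bsub>G\<^esub> x) ` A \<in> sets M \<and> emeasure M ((\<lambda>x. inv\<^bsub>G\<^esub> x) ` A) = emeasure M A)"

definition character :: "('a, 'b) monoid_scheme \<Rightarrow> ('a \<Rightarrow> complex) \<Rightarrow> bool" where
  "character G \<mu> \<longleftrightarrow> (\<forall>x\<in>carrier G. \<mu> x \<noteq> 0)
     \<and> (\<forall>x\<in>carrier G. \<forall>y\<in>carrier G. \<mu> (x \<otimes>\<^bsub>G\<^esub> y) = \<mu> x * \<mu> y)"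

definition K_central :: "('a, 'b) monoid_scheme \<Rightarrow> 'a set \<Rightarrow> ('a \<Rightarrow> complex) \<Rightarrow> bool" where
  "K_central G K f \<longleftrightarrow> (\<forall>k\<in>K. \<forall>x\<in>carrier G. f (k \<otimes>\<^bsub>G\<^esub> x) = f (x \<otimes>\<^bsub>G\<^esub> k))"

end

theory Submission
  imports Defs
begin

text \<open>
  Write \<open>P(x, y) = \<integral>\<^sub>K f(x k y k\<inverse>) dk\<close>. Taking \<open>y = e\<close> gives \<open>f(e) = 1\<close>. Replacing \<open>y\<close> by
  \<open>k\<^sub>0 y k\<^sub>0\<inverse>\<close> with \<open>k\<^sub>0 \<in> K\<close> leaves the left-hand side unchanged by right invariance of
  \<open>dk\<close>, so \<open>f\<close> is invariant under conjugation by \<open>K\<close>, i.e. \<open>K\<close>-central; then \<open>x = e\<close> gives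
  \<open>f(x) = \<mu>(x) f(x\<inverse>)\<close>. Applying this to the integrand and using inversion invariance yields
  \<open>P(x, y) = \<mu>(x) \<mu>(y) P(y\<inverse>, x\<inverse>)\<close>, and comparing the equation at \<open>(x, y)\<close> and \<open>(y, x)\<close>
  gives \<open>P(x, y) = P(y, x)\<close>. For the last identity, integrating the equation in either argument
  expresses \<open>P(x, y) f(z)\<close>, \<open>P(x, z) f(y)\<close> and \<open>f(x) f(y) f(z)\<close> through four double integrals
  over \<open>K \<times> K\<close>; Fubini's theorem, which holds since the integrands are continuous on the
  compact space \<open>K \<times> K\<close>, together with the invariance of \<open>dk\<close> identifies them.
\<close>

section \<open>Borel probability measures on compact spaces\<close>

lemma uniform_continuity_in_compact_factor:
  fixes F :: "'a \<times> 'b \<Rightarrow> 'c::real_normed_vector"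
  assumes F: "continuous_map (prod_topology X Y) euclidean F" and Y: "compact_space Y"
    and x0: "x0 \<in> topspace X" and e: "e > 0"
  shows "\<exists>U. openin X U \<and> x0 \<in> U \<and> (\<forall>x\<in>U. \<forall>y\<in>topspace Y. norm (F (x, y) - F (x0, y)) < e)"
proof -
  let ?W = "{p \<in> topspace (prod_topology X Y). norm (F p - F (x0, snd p)) \<in> {..<e}}"
  have "continuous_map (prod_topology X Y) euclidean (\<lambda>p. norm (F p - F (x0, snd p)))"
  proof (intro continuous_map_norm continuous_map_diff F)
    have "continuous_map (prod_topology X Y) (prod_topology X Y) (\<lambda>p. (x0, snd p))"
      using x0 by (intro continuous_map_pairedI continuous_map_snd) auto
    then show "continuous_map (prod_topology X Y) euclidean (\<lambda>p. F (x0, snd p))"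
      using continuous_map_compose[OF _ F] by (simp add: o_def)
  qed
  then have W: "openin (prod_topology X Y) ?W"
    by (rule openin_continuous_map_preimage) simp
  have "{x0} \<times> topspace Y \<subseteq> ?W"
    using x0 e by auto
  from tube_lemma_right[OF W Y[unfolded compact_space_def] x0 this]
  obtain U V where U: "openin X U" "x0 \<in> U" and UV: "topspace Y \<subseteq> V" "U \<times> V \<subseteq> ?W"
    by blast
  have "norm (F (x, y) - F (x0, y)) < e" if "x \<in> U" "y \<in> topspace Y" for x y
    using UV that by (auto dest!: subsetD[of "U \<times> V" _ "(x, y)"])
  with U show ?thesis by blast
qed

lemma distr_eq_self_if_inverse_preserves_measure:
  assumes inverse: "\<And>x. x \<in> space M \<Longrightarrow> T x \<in> space M \<and> S x \<in> space M \<and> T (S x) = x \<and> S (T x) = x"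
    and preserves: "\<And>A. A \<in> sets M \<Longrightarrow> S ` A \<in> sets M \<and> emeasure M (S ` A) = emeasure M A"
  shows "T \<in> measurable M M" "distr M M T = M"
proof -
  have vimage: "T -` A \<inter> space M = S ` A" if "A \<in> sets M" for A
    using sets.sets_into_space[OF that] inverse by (force simp: image_iff)
  show meas: "T \<in> measurable M M"
    by (rule measurableI) (use inverse vimage preserves in auto)
  show "distr M M T = M"
    by (rule measure_eqI) (simp_all add: emeasure_distr meas vimage preserves)
qed

lemma integral_eq_if_inverse_preserves_measure:
  fixes g :: "'a \<Rightarrow> 'b::{banach,second_countable_topology}"
  assumes "\<And>x. x \<in> space M \<Longrightarrow> T x \<in> space M \<and> S x \<in> space M \<and> T (S x) = x \<and> S (T x) = x"
    and "\<And>A. A \<in> sets M \<Longrightarrow> S ` A \<in> sets M \<and> emeasure M (S ` A) = emeasure M A"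
    and "g \<in> borel_measurable M"
  shows "(\<integral>x. g (T x) \<partial>M) = integral\<^sup>L M g"
  using integral_distr[OF distr_eq_self_if_inverse_preserves_measure(1)[OF assms(1,2)] assms(3)]
  by (simp add: distr_eq_self_if_inverse_preserves_measure(2)[OF assms(1,2)])

lemma borel_measurable_uniform_limit:
  fixes f :: "'a \<Rightarrow> 'b::metric_space"
  assumes approx: "\<And>e. e > 0 \<Longrightarrow> \<exists>s\<in>borel_measurable M. \<forall>x\<in>space M. dist (s x) (f x) < e"
  shows "f \<in> borel_measurable M"
proof -
  have "\<forall>n. \<exists>s. s \<in> borel_measurable M \<and> (\<forall>x\<in>space M. dist (s x) (f x) < inverse (Suc n))"
  proof
    fix n
    show "\<exists>s. s \<in> borel_measurable M \<and> (\<forall>x\<in>space M. dist (s x) (f x) < inverse (Suc n))"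
      using approx[of "inverse (Suc n)"] by auto
  qed
  then obtain s where s: "\<And>n. s n \<in> borel_measurable M"
    and close: "\<And>n x. x \<in> space M \<Longrightarrow> dist (s n x) (f x) < inverse (Suc n)"
    unfolding choice_iff by blast
  show ?thesis
  proof (rule borel_measurable_LIMSEQ_metric[OF s])
    fix x assume x: "x \<in> space M"
    show "(\<lambda>n. s n x) \<longlonglongrightarrow> f x"
    proof (rule metric_LIMSEQ_I)
      fix r :: real assume "r > 0"
      then obtain N where N: "inverse (Suc N) < r"
        using reals_Archimedean by blast
      have "dist (s n x) (f x) < r" if "n \<ge> N" for n
      proof -
        have "inverse (real (Suc n)) \<le> inverse (Suc N)"
          using that by (intro le_imp_inverse_le) auto
        then show ?thesis using close[OF x, of n] N by linarith
      qed
      then show "\<exists>N. \<forall>n\<ge>N. dist (s n x) (f x) < r" by blast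
    qed
  qed
qed

locale compact_borel_prob_space = prob_space M for M :: "'a measure" +
  fixes X :: "'a topology"
  assumes compact_X: "compact_space X"
    and space_eq: "space M = topspace X"
    and sets_eq: "sets M = sigma_sets (topspace X) {U. openin X U}"
begin

lemma openin_in_sets: "openin X U \<Longrightarrow> U \<in> sets M"
  by (simp add: sets_eq)

lemma borel_measurable_continuous_map:
  fixes g :: "'a \<Rightarrow> 'b::topological_space"
  assumes "continuous_map X euclidean g"
  shows "g \<in> borel_measurable M"
proof (rule borel_measurableI)
  fix S :: "'b set" assume "open S"
  then have "openin X {x \<in> topspace X. g x \<in> S}"
    using assms by (simp add: continuous_map_def)
  then show "g -` S \<inter> space M \<in> sets M"
    using openin_in_sets by (simp add: space_eq Int_def conj_commute)
qed

lemma integrable_continuous_map: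
  fixes g :: "'a \<Rightarrow> 'b::{banach,second_countable_topology}"
  assumes g: "continuous_map X euclidean g"
  shows "integrable M g"
proof -
  have "compact (g ` topspace X)"
    using image_compactin[OF _ g] compact_X by (simp add: compact_space_def)
  then obtain B where "\<forall>x\<in>topspace X. norm (g x) \<le> B"
    by (auto dest!: compact_imp_bounded simp: bounded_iff)
  then show ?thesis
    by (intro integrable_const_bound[where B=B]) (auto simp: space_eq borel_measurable_continuous_map[OF g])
qed

lemma step_approximation:
  fixes F :: "'a \<times> 'a \<Rightarrow> 'b::real_normed_vector"
  assumes F: "continuous_map (prod_topology X X) euclidean F" and e: "e > 0"
  obtains m :: nat and c A where "\<And>i. i < m \<Longrightarrow> c i \<in> topspace X \<and> A i \<in> sets M"
    and "\<And>h k. h \<in> topspace X \<Longrightarrow> k \<in> topspace X \<Longrightarrow>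
       norm (F (h, k) - (\<Sum>i<m. indicator (A i) h *\<^sub>R F (c i, k))) < e"
proof -
  obtain U where U: "\<And>h0. h0 \<in> topspace X \<Longrightarrow> openin X (U h0) \<and> h0 \<in> U h0 \<and>
      (\<forall>h\<in>U h0. \<forall>k\<in>topspace X. norm (F (h, k) - F (h0, k)) < e)"
    using uniform_continuity_in_compact_factor[OF F compact_X _ e] by metis
  obtain \<F> where "finite \<F>" "\<F> \<subseteq> U ` topspace X" "topspace X \<subseteq> \<Union>\<F>"
    using compactinD[OF compact_X[unfolded compact_space_def], of "U ` topspace X"] U by blast
  then obtain D where D: "finite D" "D \<subseteq> topspace X" "topspace X \<subseteq> (\<Union>d\<in>D. U d)"
    by (metis finite_subset_image)
  obtain cs where cs: "set cs = D" using finite_list[OF D(1)] by blast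
  define m where "m = length cs"
  define c where "c i = cs ! i" for i
  define A where "A i = U (c i) - (\<Union>j<i. U (c j))" for i
  have c: "c i \<in> topspace X" if "i < m" for i
    using that D cs unfolding c_def m_def by auto
  have A: "A i \<in> sets M" if "i < m" for i
    unfolding A_def using that c U openin_in_sets by (intro sets.Diff sets.finite_UN) auto
  have approx: "norm (F (h, k) - (\<Sum>i<m. indicator (A i) h *\<^sub>R F (c i, k))) < e"
    if h: "h \<in> topspace X" and k: "k \<in> topspace X" for h k
  proof -
    have "\<exists>i. i < m \<and> h \<in> U (c i)"
      using D(3) h cs unfolding c_def m_def by (metis UN_E in_set_conv_nth subsetD)
    then obtain i0 where "i0 < m \<and> h \<in> U (c i0)" "\<And>j. j < i0 \<Longrightarrow> \<not> (j < m \<and> h \<in> U (c j))"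
      unfolding exists_least_iff[of "\<lambda>i. i < m \<and> h \<in> U (c i)"] by blast
    then have i0: "i0 < m" "h \<in> U (c i0)" "\<And>j. j < i0 \<Longrightarrow> h \<notin> U (c j)"
      by auto
    then have "indicator (A i) h = (if i = i0 then 1 else 0 :: real)" for i
      unfolding A_def by (cases i i0 rule: linorder_cases) (auto simp: indicator_def)
    then have "(\<Sum>i<m. indicator (A i) h *\<^sub>R F (c i, k)) = (\<Sum>i<m. if i = i0 then F (c i, k) else 0)"
      by (intro sum.cong) auto
    also have "\<dots> = F (c i0, k)"
      using i0(1) by simp
    finally show ?thesis using U[OF c[OF i0(1)]] i0(2) k by simp
  qed
  show ?thesis by (rule that[of m c A, OF _ approx]) (use c A in blast)
qed

text \<open>
  Without second countability the product of the Borel \<open>\<sigma>\<close>-algebras may be smaller than the Borel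
  \<open>\<sigma>\<close>-algebra of the product, so measurability is obtained from uniform approximation by step
  functions in the first variable.
\<close>

lemma borel_measurable_pair_continuous_map:
  fixes F :: "'a \<times> 'a \<Rightarrow> 'b::{real_normed_vector,second_countable_topology}"
  assumes F: "continuous_map (prod_topology X X) euclidean F"
  shows "F \<in> borel_measurable (M \<Otimes>\<^sub>M M)"
proof (rule borel_measurable_uniform_limit)
  fix e :: real assume "e > 0"
  show "\<exists>s\<in>borel_measurable (M \<Otimes>\<^sub>M M). \<forall>p\<in>space (M \<Otimes>\<^sub>M M). dist (s p) (F p) < e"
  proof (rule step_approximation[OF F \<open>e > 0\<close>])
    fix m :: nat and c A
    assume cA: "\<And>i. i < m \<Longrightarrow> c i \<in> topspace X \<and> A i \<in> sets M"
      and approx: "\<And>h k. h \<in> topspace X \<Longrightarrow> k \<in> topspace X \<Longrightarrow>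
         norm (F (h, k) - (\<Sum>i<m. indicator (A i) h *\<^sub>R F (c i, k))) < e"
    have summand: "(\<lambda>p. indicator (A i) (fst p) *\<^sub>R F (c i, snd p)) \<in> borel_measurable (M \<Otimes>\<^sub>M M)"
      if "i < m" for i
    proof -
      have [measurable]: "A i \<in> sets M" using cA[OF that] by simp
      have "continuous_map X (prod_topology X X) (\<lambda>k. (c i, k))"
        using cA[OF that] by (intro continuous_map_pairedI) auto
      then have [measurable]: "(\<lambda>k. F (c i, k)) \<in> borel_measurable M"
        using continuous_map_compose[OF _ F] by (intro borel_measurable_continuous_map) (simp add: o_def)
      show ?thesis by measurable
    qed
    define s where "s p = (\<Sum>i<m. indicator (A i) (fst p) *\<^sub>R F (c i, snd p))" for p
    have "s \<in> borel_measurable (M \<Otimes>\<^sub>M M)"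
      unfolding s_def by (intro borel_measurable_sum summand) simp
    moreover have "\<forall>p\<in>space (M \<Otimes>\<^sub>M M). dist (s p) (F p) < e"
    proof
      fix p assume "p \<in> space (M \<Otimes>\<^sub>M M)"
      then have "fst p \<in> topspace X" "snd p \<in> topspace X"
        by (auto simp: space_pair_measure space_eq)
      from approx[OF this] show "dist (s p) (F p) < e"
        by (simp only: s_def dist_norm norm_minus_commute prod.collapse)
    qed
    ultimately show ?thesis by blast
  qed
qed

lemma Fubini_continuous_map:
  fixes F :: "'a \<Rightarrow> 'a \<Rightarrow> 'b::{banach,second_countable_topology}"
  assumes F: "continuous_map (prod_topology X X) euclidean (\<lambda>p. F (fst p) (snd p))"
  shows "integrable M (\<lambda>h. \<integral>k. F h k \<partial>M)" "integrable M (\<lambda>k. \<integral>h. F h k \<partial>M)"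
    "(\<integral>h. (\<integral>k. F h k \<partial>M) \<partial>M) = (\<integral>k. (\<integral>h. F h k \<partial>M) \<partial>M)"
proof -
  interpret pair_prob_space M M ..
  have "compact ((\<lambda>p. F (fst p) (snd p)) ` topspace (prod_topology X X))"
    using image_compactin[OF _ F] compact_X compact_space_prod_topology[of X X]
    by (simp add: compact_space_def)
  then obtain B where "\<forall>p\<in>topspace X \<times> topspace X. norm (F (fst p) (snd p)) \<le> B"
    by (auto dest!: compact_imp_bounded simp: bounded_iff)
  then have int: "integrable (M \<Otimes>\<^sub>M M) (\<lambda>(h, k). F h k)"
    by (intro integrable_const_bound[where B=B])
       (auto simp: space_pair_measure space_eq split_beta' borel_measurable_pair_continuous_map[OF F])
  show "integrable M (\<lambda>h. \<integral>k. F h k \<partial>M)" using integrable_fst[OF int] by simp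
  show "integrable M (\<lambda>k. \<integral>h. F h k \<partial>M)" using integrable_snd[OF int] by simp
  show "(\<integral>h. (\<integral>k. F h k \<partial>M) \<partial>M) = (\<integral>k. (\<integral>h. F h k \<partial>M) \<partial>M)"
    using integral_fst[OF int] integral_snd[OF int] by simp
qed

end


section \<open>Haar measure on a compact subgroup\<close>

lemma (in group) mult_inv_cancel_left [simp]:
  "x \<in> carrier G \<Longrightarrow> y \<in> carrier G \<Longrightarrow> x \<otimes> (inv x \<otimes> y) = y"
  by (simp flip: m_assoc)

lemma (in group) inv_mult_cancel_left [simp]:
  "x \<in> carrier G \<Longrightarrow> y \<in> carrier G \<Longrightarrow> inv x \<otimes> (x \<otimes> y) = y"
  by (simp flip: m_assoc)

lemma (in group) character_mult:
  "character G \<mu> \<Longrightarrow> x \<in> carrier G \<Longrightarrow> y \<in> carrier G \<Longrightarrow> \<mu> (x \<otimes> y) = \<mu> x * \<mu> y"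
  unfolding character_def by blast

lemma (in group) character_one:
  assumes "character G \<mu>"
  shows "\<mu> \<one> = 1"
proof -
  have "\<mu> \<one> * \<mu> \<one> = \<mu> \<one> * 1"
    using character_mult[OF assms, of \<one> \<one>] by simp
  moreover have "\<mu> \<one> \<noteq> 0" using assms unfolding character_def by simp
  ultimately show ?thesis by auto
qed

lemma (in group) character_inv:
  assumes "character G \<mu>" "x \<in> carrier G"
  shows "\<mu> (inv x) * \<mu> x = 1"
  using character_mult[OF assms(1), of "inv x" x] assms by (simp add: character_one)

lemma (in group) character_conj:
  assumes "character G \<mu>" "k \<in> carrier G" "y \<in> carrier G"
  shows "\<mu> (k \<otimes> y \<otimes> inv k) = \<mu> y"
proof -
  have "\<mu> (k \<otimes> y \<otimes> inv k) = \<mu> y * (\<mu> (inv k) * \<mu> k)"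
    using assms by (simp add: character_mult mult_ac)
  then show ?thesis using character_inv[OF assms(1,2)] by simp
qed

locale compact_subgroup_Haar = group G for G :: "('a, 'b) monoid_scheme" (structure) +
  fixes T :: "'a topology" and K :: "'a set" and M :: "'a measure"
  assumes topspace_eq: "topspace T = carrier G"
    and continuous_mult: "continuous_map (prod_topology T T) T (\<lambda>p. fst p \<otimes> snd p)"
    and continuous_inv: "continuous_map T T (\<lambda>x. inv x)"
    and subgroup_K: "subgroup K G" and compact_K: "compactin T K"
    and Haar: "normalized_haar G T K M"
begin

lemma K_carrier [simp]: "k \<in> K \<Longrightarrow> k \<in> carrier G"
  using subgroup.mem_carrier[OF subgroup_K] .

lemma space_Haar: "space M = K"
  using Haar unfolding normalized_haar_def by (elim conjE)

lemma Haar_left_invariant: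
  "\<forall>k\<in>K. \<forall>A\<in>sets M. (\<lambda>x. k \<otimes> x) ` A \<in> sets M \<and> emeasure M ((\<lambda>x. k \<otimes> x) ` A) = emeasure M A"
  using Haar unfolding normalized_haar_def by (elim conjE)

lemma Haar_right_invariant:
  "\<forall>k\<in>K. \<forall>A\<in>sets M. (\<lambda>x. x \<otimes> k) ` A \<in> sets M \<and> emeasure M ((\<lambda>x. x \<otimes> k) ` A) = emeasure M A"
  using Haar unfolding normalized_haar_def by (elim conjE)

lemma Haar_inverse_invariant:
  "\<forall>A\<in>sets M. (\<lambda>x. inv x) ` A \<in> sets M \<and> emeasure M ((\<lambda>x. inv x) ` A) = emeasure M A"
  using Haar unfolding normalized_haar_def by (elim conjE)

sublocale Haar: compact_borel_prob_space M "subtopology T K"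
proof (intro compact_borel_prob_space.intro compact_borel_prob_space_axioms.intro)
  have K: "topspace (subtopology T K) = K"
    using subgroup.subset[OF subgroup_K] topspace_eq by (simp add: Int_absorb1)
  show "prob_space M" using Haar unfolding normalized_haar_def by (elim conjE)
  show "compact_space (subtopology T K)" using compact_space_subtopology[OF compact_K] .
  show "space M = topspace (subtopology T K)" using space_Haar K by simp
  have "sets M = sets (borel_of_top (subtopology T K))"
    using Haar unfolding normalized_haar_def by (elim conjE)
  also have "\<dots> = sigma_sets (topspace (subtopology T K)) {U. openin (subtopology T K) U}"
    unfolding borel_of_top_def by (rule sets_measure_of) (use openin_subset in blast)
  finally show "sets M = sigma_sets (topspace (subtopology T K)) {U. openin (subtopology T K) U}" .
qed

lemma integral_translate_right:
  fixes g :: "'a \<Rightarrow> 'c::{banach,second_countable_topology}"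
  assumes k0: "k0 \<in> K" and g: "g \<in> borel_measurable M"
  shows "(\<integral>k. g (k \<otimes> k0) \<partial>M) = integral\<^sup>L M g"
proof (rule integral_eq_if_inverse_preserves_measure[OF _ _ g])
  show "k \<otimes> k0 \<in> space M \<and> k \<otimes> inv k0 \<in> space M \<and> k \<otimes> inv k0 \<otimes> k0 = k \<and> k \<otimes> k0 \<otimes> inv k0 = k"
    if "k \<in> space M" for k
    using that k0 subgroup_K by (simp add: space_Haar subgroup.m_closed subgroup.m_inv_closed m_assoc)
  show "(\<lambda>k. k \<otimes> inv k0) ` A \<in> sets M \<and> emeasure M ((\<lambda>k. k \<otimes> inv k0) ` A) = emeasure M A"
    if "A \<in> sets M" for A
    using Haar_right_invariant that subgroup.m_inv_closed[OF subgroup_K k0] by blast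
qed

lemma integral_translate_left:
  fixes g :: "'a \<Rightarrow> 'c::{banach,second_countable_topology}"
  assumes k0: "k0 \<in> K" and g: "g \<in> borel_measurable M"
  shows "(\<integral>k. g (k0 \<otimes> k) \<partial>M) = integral\<^sup>L M g"
proof (rule integral_eq_if_inverse_preserves_measure[OF _ _ g])
  show "k0 \<otimes> k \<in> space M \<and> inv k0 \<otimes> k \<in> space M \<and> k0 \<otimes> (inv k0 \<otimes> k) = k \<and> inv k0 \<otimes> (k0 \<otimes> k) = k"
    if "k \<in> space M" for k
    using that k0 subgroup_K
    by (simp add: space_Haar subgroup.m_closed subgroup.m_inv_closed flip: m_assoc)
  show "(\<lambda>k. inv k0 \<otimes> k) ` A \<in> sets M \<and> emeasure M ((\<lambda>k. inv k0 \<otimes> k) ` A) = emeasure M A"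
    if "A \<in> sets M" for A
    using Haar_left_invariant that subgroup.m_inv_closed[OF subgroup_K k0] by blast
qed

lemma integral_inverse:
  fixes g :: "'a \<Rightarrow> 'c::{banach,second_countable_topology}"
  assumes g: "g \<in> borel_measurable M"
  shows "(\<integral>k. g (inv k) \<partial>M) = integral\<^sup>L M g"
proof (rule integral_eq_if_inverse_preserves_measure[OF _ _ g])
  show "inv k \<in> space M \<and> inv k \<in> space M \<and> inv (inv k) = k \<and> inv (inv k) = k"
    if "k \<in> space M" for k
    using that subgroup_K by (simp add: space_Haar subgroup.m_inv_closed)
  show "(\<lambda>k. inv k) ` A \<in> sets M \<and> emeasure M ((\<lambda>k. inv k) ` A) = emeasure M A"
    if "A \<in> sets M" for A
    using Haar_inverse_invariant that by blast
qed

lemma continuous_map_group_mult: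
  "continuous_map Z T a \<Longrightarrow> continuous_map Z T b \<Longrightarrow> continuous_map Z T (\<lambda>x. a x \<otimes> b x)"
  using continuous_map_compose[OF continuous_map_pairedI continuous_mult] by (simp add: o_def)

lemma continuous_map_group_inv: "continuous_map Z T a \<Longrightarrow> continuous_map Z T (\<lambda>x. inv (a x))"
  using continuous_map_compose[OF _ continuous_inv] by (simp add: o_def)

lemma continuous_map_group_const: "c \<in> carrier G \<Longrightarrow> continuous_map Z T (\<lambda>x. c)"
  by (simp add: topspace_eq)

lemma continuous_map_from_K: "continuous_map Z (subtopology T K) a \<Longrightarrow> continuous_map Z T a"
  by (simp add: continuous_map_in_subtopology)

lemmas continuous_map_group_intros = continuous_map_group_mult continuous_map_group_inv
  continuous_map_group_const continuous_map_fst continuous_map_snd continuous_map_id[unfolded id_def]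
  continuous_map_from_K

lemma integrable_continuous_comp:
  fixes g :: "'a \<Rightarrow> 'c::{banach,second_countable_topology}"
  assumes "continuous_map T euclidean g" "continuous_map (subtopology T K) T v"
  shows "integrable M (\<lambda>k. g (v k))"
  using Haar.integrable_continuous_map continuous_map_compose[OF assms(2,1)] by (simp add: o_def)

lemma borel_measurable_continuous_comp:
  fixes g :: "'a \<Rightarrow> 'c::{banach,second_countable_topology}"
  assumes "continuous_map T euclidean g" "continuous_map (subtopology T K) T v"
  shows "(\<lambda>k. g (v k)) \<in> borel_measurable M"
  using integrable_continuous_comp[OF assms] by (rule borel_measurable_integrable)

abbreviation conj_avg :: "('a \<Rightarrow> 'c::{banach,second_countable_topology}) \<Rightarrow> 'a \<Rightarrow> 'a \<Rightarrow> 'c" where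
  "conj_avg g x y \<equiv> \<integral>k. g (x \<otimes> k \<otimes> y \<otimes> inv k) \<partial>M"

lemmas group_simps = m_assoc inv_mult_group K_carrier

lemma continuous_map_conj:
  "a \<in> carrier G \<Longrightarrow> b \<in> carrier G \<Longrightarrow> continuous_map (subtopology T K) T (\<lambda>k. a \<otimes> k \<otimes> b \<otimes> inv k)"
  by (intro continuous_map_group_intros) auto

lemma conj_avg_one_right:
  assumes "x \<in> carrier G"
  shows "conj_avg g x \<one> = g x"
proof -
  have "conj_avg g x \<one> = (\<integral>k. g x \<partial>M)"
    by (rule Bochner_Integration.integral_cong) (use assms in \<open>auto simp: space_Haar group_simps\<close>)
  then show ?thesis by (simp add: Haar.prob_space)
qed

lemma conj_avg_conj_right:
  assumes g: "continuous_map T euclidean g"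
    and k0: "k0 \<in> K" and a: "a \<in> carrier G" and y: "y \<in> carrier G"
  shows "conj_avg g a (k0 \<otimes> y \<otimes> inv k0) = conj_avg g a y"
proof -
  have "conj_avg g a (k0 \<otimes> y \<otimes> inv k0) = (\<integral>k. g (a \<otimes> (k \<otimes> k0) \<otimes> y \<otimes> inv (k \<otimes> k0)) \<partial>M)"
    by (rule Bochner_Integration.integral_cong) (use k0 a y in \<open>auto simp: space_Haar group_simps\<close>)
  also have "\<dots> = conj_avg g a y"
    by (rule integral_translate_right[OF k0 borel_measurable_continuous_comp[OF g continuous_map_conj[OF a y]]])
  finally show ?thesis .
qed

lemma integrable_conj_avg_right:
  assumes g: "continuous_map T euclidean g"
    and a: "a \<in> carrier G" and v: "continuous_map (subtopology T K) T v"
  shows "integrable M (\<lambda>k. conj_avg g a (v k))"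
proof (rule Haar.Fubini_continuous_map(2)[of "\<lambda>h k. g (a \<otimes> h \<otimes> v k \<otimes> inv h)"])
  have v_snd: "continuous_map (prod_topology (subtopology T K) (subtopology T K)) T (\<lambda>p. v (snd p))"
    using continuous_map_compose[OF continuous_map_snd v] by (simp add: o_def)
  show "continuous_map (prod_topology (subtopology T K) (subtopology T K)) euclidean
      (\<lambda>p. g (a \<otimes> fst p \<otimes> v (snd p) \<otimes> inv (fst p)))"
    using a by (intro continuous_map_compose[OF _ g, unfolded o_def] v_snd continuous_map_group_intros) auto
qed

lemma integrable_conj_avg_left:
  assumes g: "continuous_map T euclidean g"
    and b: "b \<in> carrier G" and u: "continuous_map (subtopology T K) T u"
  shows "integrable M (\<lambda>h. conj_avg g (u h) b)"
proof (rule Haar.Fubini_continuous_map(1)[of "\<lambda>h k. g (u h \<otimes> k \<otimes> b \<otimes> inv k)"])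
  have u_fst: "continuous_map (prod_topology (subtopology T K) (subtopology T K)) T (\<lambda>p. u (fst p))"
    using continuous_map_compose[OF continuous_map_fst u] by (simp add: o_def)
  show "continuous_map (prod_topology (subtopology T K) (subtopology T K)) euclidean
      (\<lambda>p. g (u (fst p) \<otimes> snd p \<otimes> b \<otimes> inv (snd p)))"
    using b by (intro continuous_map_compose[OF _ g, unfolded o_def] u_fst continuous_map_group_intros) auto
qed

lemma conj_avg_iterated:
  assumes g: "continuous_map T euclidean g"
    and a: "a \<in> carrier G" and y: "y \<in> carrier G" and z: "z \<in> carrier G"
  shows "(\<integral>k. conj_avg g a (y \<otimes> k \<otimes> z \<otimes> inv k) \<partial>M) = (\<integral>h. conj_avg g (a \<otimes> h \<otimes> y \<otimes> inv h) z \<partial>M)"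
proof -
  have "continuous_map (prod_topology (subtopology T K) (subtopology T K)) euclidean
      (\<lambda>p. g (a \<otimes> fst p \<otimes> (y \<otimes> snd p \<otimes> z \<otimes> inv (snd p)) \<otimes> inv (fst p)))"
    using a y z by (intro continuous_map_compose[OF _ g, unfolded o_def] continuous_map_group_intros) auto
  then have "(\<integral>k. conj_avg g a (y \<otimes> k \<otimes> z \<otimes> inv k) \<partial>M) =
      (\<integral>h. (\<integral>k. g (a \<otimes> h \<otimes> (y \<otimes> k \<otimes> z \<otimes> inv k) \<otimes> inv h) \<partial>M) \<partial>M)"
    by (rule Haar.Fubini_continuous_map(3)[symmetric])
  also have "\<dots> = (\<integral>h. conj_avg g (a \<otimes> h \<otimes> y \<otimes> inv h) z \<partial>M)"
  proof (rule Bochner_Integration.integral_cong[OF refl])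
    fix h assume "h \<in> space M"
    then have h: "h \<in> K" by (simp add: space_Haar)
    have "(\<integral>k. g (a \<otimes> h \<otimes> (y \<otimes> k \<otimes> z \<otimes> inv k) \<otimes> inv h) \<partial>M)
        = (\<integral>k. g (a \<otimes> h \<otimes> y \<otimes> inv h \<otimes> (h \<otimes> k) \<otimes> z \<otimes> inv (h \<otimes> k)) \<partial>M)"
      by (rule Bochner_Integration.integral_cong) (use a y z h in \<open>auto simp: space_Haar group_simps\<close>)
    also have "\<dots> = conj_avg g (a \<otimes> h \<otimes> y \<otimes> inv h) z"
      using a y z h
      by (intro integral_translate_left borel_measurable_continuous_comp[OF g] continuous_map_conj) auto
    finally show "(\<integral>k. g (a \<otimes> h \<otimes> (y \<otimes> k \<otimes> z \<otimes> inv k) \<otimes> inv h) \<partial>M) = conj_avg g (a \<otimes> h \<otimes> y \<otimes> inv h) z" .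
  qed
  finally show ?thesis .
qed

lemma conj_avg_inverse_swap:
  assumes g: "continuous_map T euclidean g"
    and a: "a \<in> carrier G" and z: "z \<in> carrier G" and w: "w \<in> carrier G"
  shows "(\<integral>k. conj_avg g a (k \<otimes> z \<otimes> inv k \<otimes> w) \<partial>M) = (\<integral>k. conj_avg g a (z \<otimes> k \<otimes> w \<otimes> inv k) \<partial>M)"
proof -
  have "(\<integral>k. conj_avg g a (k \<otimes> z \<otimes> inv k \<otimes> w) \<partial>M) = (\<integral>k. conj_avg g a (z \<otimes> inv k \<otimes> w \<otimes> inv (inv k)) \<partial>M)"
  proof (rule Bochner_Integration.integral_cong[OF refl])
    fix k assume "k \<in> space M"
    then have k: "k \<in> K" by (simp add: space_Haar)
    have "k \<otimes> z \<otimes> inv k \<otimes> w = k \<otimes> (z \<otimes> inv k \<otimes> w \<otimes> k) \<otimes> inv k"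
      using z w k by (simp add: group_simps)
    then show "conj_avg g a (k \<otimes> z \<otimes> inv k \<otimes> w) = conj_avg g a (z \<otimes> inv k \<otimes> w \<otimes> inv (inv k))"
      using conj_avg_conj_right[OF g k a, of "z \<otimes> inv k \<otimes> w \<otimes> k"] z w k by simp
  qed
  also have "\<dots> = (\<integral>k. conj_avg g a (z \<otimes> k \<otimes> w \<otimes> inv k) \<partial>M)"
    by (rule integral_inverse[OF borel_measurable_integrable[OF integrable_conj_avg_right[OF g a continuous_map_conj[OF z w]]]])
  finally show ?thesis .
qed

end

section \<open>The functional equation\<close>

locale K_dAlembert_equation = compact_subgroup_Haar +
  fixes \<mu> f :: "'a \<Rightarrow> complex"
  assumes character: "character G \<mu>"
    and continuous_f: "continuous_map T euclidean f"
    and f_nonzero: "\<exists>x\<in>carrier G. f x \<noteq> 0"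
    and equation: "\<And>x y. x \<in> carrier G \<Longrightarrow> y \<in> carrier G \<Longrightarrow>
       conj_avg f x y + \<mu> y * conj_avg f x (inv y) = 2 * f x * f y"
begin

lemma f_one: "f \<one> = 1"
proof -
  obtain x0 where x0: "x0 \<in> carrier G" "f x0 \<noteq> 0" using f_nonzero by blast
  have "f x0 + f x0 = 2 * f x0 * f \<one>"
    using equation[OF x0(1) one_closed] by (simp add: conj_avg_one_right x0 character_one[OF character])
  then show ?thesis using x0(2) by (simp add: algebra_simps)
qed

lemma f_conj:
  assumes k0: "k0 \<in> K" and y: "y \<in> carrier G"
  shows "f (k0 \<otimes> y \<otimes> inv k0) = f y"
proof -
  obtain x0 where x0: "x0 \<in> carrier G" "f x0 \<noteq> 0" using f_nonzero by blast
  have "inv (k0 \<otimes> y \<otimes> inv k0) = k0 \<otimes> inv y \<otimes> inv k0"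
    using k0 y by (simp add: group_simps)
  then have "2 * f x0 * f (k0 \<otimes> y \<otimes> inv k0) = conj_avg f x0 y + \<mu> y * conj_avg f x0 (inv y)"
    using equation[OF x0(1), of "k0 \<otimes> y \<otimes> inv k0"] k0 y
    by (simp add: conj_avg_conj_right[OF continuous_f k0 x0(1)] character_conj[OF character])
  also have "\<dots> = 2 * f x0 * f y" using equation[OF x0(1) y] .
  finally show ?thesis using x0(2) by simp
qed

lemma f_K_central: "k \<in> K \<Longrightarrow> x \<in> carrier G \<Longrightarrow> f (k \<otimes> x) = f (x \<otimes> k)"
  using f_conj[of k "x \<otimes> k"] by (simp add: group_simps)

lemma conj_avg_one_left: "y \<in> carrier G \<Longrightarrow> conj_avg f \<one> y = f y"
proof -
  assume y: "y \<in> carrier G"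
  have "conj_avg f \<one> y = (\<integral>k. f y \<partial>M)"
    by (rule Bochner_Integration.integral_cong) (use y f_conj in \<open>auto simp: space_Haar\<close>)
  then show ?thesis by (simp add: Haar.prob_space)
qed

lemma f_eq_character_mult_f_inv: "y \<in> carrier G \<Longrightarrow> f y = \<mu> y * f (inv y)"
  using equation[OF one_closed, of y] by (simp add: conj_avg_one_left f_one)

lemma conj_avg_inv:
  assumes x: "x \<in> carrier G" and y: "y \<in> carrier G"
  shows "conj_avg f x y = \<mu> x * \<mu> y * conj_avg f (inv y) (inv x)"
proof -
  have "f (x \<otimes> k \<otimes> y \<otimes> inv k) = \<mu> x * \<mu> y * f (inv y \<otimes> inv k \<otimes> inv x \<otimes> inv (inv k))"
    if k: "k \<in> K" for k
  proof -
    have "\<mu> (x \<otimes> k \<otimes> y \<otimes> inv k) = \<mu> x * \<mu> y"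
      using character_conj[OF character, of k y] x y k by (simp add: character_mult[OF character] group_simps)
    moreover have "inv (x \<otimes> k \<otimes> y \<otimes> inv k) = k \<otimes> (inv y \<otimes> inv k \<otimes> inv x \<otimes> k) \<otimes> inv k"
      using x y k by (simp add: group_simps)
    then have "f (inv (x \<otimes> k \<otimes> y \<otimes> inv k)) = f (inv y \<otimes> inv k \<otimes> inv x \<otimes> inv (inv k))"
      using f_conj[OF k, of "inv y \<otimes> inv k \<otimes> inv x \<otimes> k"] x y k by simp
    ultimately show ?thesis
      using f_eq_character_mult_f_inv[of "x \<otimes> k \<otimes> y \<otimes> inv k"] x y k by simp
  qed
  then have "conj_avg f x y = (\<integral>k. \<mu> x * \<mu> y * f (inv y \<otimes> inv k \<otimes> inv x \<otimes> inv (inv k)) \<partial>M)"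
    by (intro Bochner_Integration.integral_cong) (simp_all add: space_Haar)
  also have "\<dots> = \<mu> x * \<mu> y * (\<integral>k. f (inv y \<otimes> inv k \<otimes> inv x \<otimes> inv (inv k)) \<partial>M)"
    by (rule integral_mult_right_zero)
  also have "(\<integral>k. f (inv y \<otimes> inv k \<otimes> inv x \<otimes> inv (inv k)) \<partial>M) = conj_avg f (inv y) (inv x)"
    using x y by (intro integral_inverse borel_measurable_continuous_comp[OF continuous_f] continuous_map_conj) auto
  finally show ?thesis .
qed

lemma conj_avg_sym:
  assumes x: "x \<in> carrier G" and y: "y \<in> carrier G"
  shows "conj_avg f x y = conj_avg f y x"
proof -
  have "\<mu> y * conj_avg f x (inv y) = \<mu> x * conj_avg f y (inv x)"
    using conj_avg_inv[of x "inv y"] character_inv[OF character y] x y by (simp add: mult_ac)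
  moreover have "conj_avg f x y + \<mu> y * conj_avg f x (inv y) = conj_avg f y x + \<mu> x * conj_avg f y (inv x)"
    using equation[OF x y] equation[OF y x] by (simp add: mult_ac)
  ultimately show ?thesis by simp
qed

lemma integrated_equation_left:
  assumes a: "a \<in> carrier G" and y: "y \<in> carrier G" and b: "b \<in> carrier G"
  shows "2 * conj_avg f a y * f b = (\<integral>h. conj_avg f (a \<otimes> h \<otimes> y \<otimes> inv h) b \<partial>M)
    + \<mu> b * (\<integral>h. conj_avg f (a \<otimes> h \<otimes> y \<otimes> inv h) (inv b) \<partial>M)"
proof -
  have "2 * conj_avg f a y * f b = (\<integral>h. 2 * f (a \<otimes> h \<otimes> y \<otimes> inv h) * f b \<partial>M)"
    by (simp add: integral_mult_left_zero integral_mult_right_zero mult_ac)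
  also have "\<dots> = (\<integral>h. conj_avg f (a \<otimes> h \<otimes> y \<otimes> inv h) b + \<mu> b * conj_avg f (a \<otimes> h \<otimes> y \<otimes> inv h) (inv b) \<partial>M)"
    using a y b by (intro Bochner_Integration.integral_cong) (simp_all add: space_Haar equation)
  also have "\<dots> = (\<integral>h. conj_avg f (a \<otimes> h \<otimes> y \<otimes> inv h) b \<partial>M)
      + \<mu> b * (\<integral>h. conj_avg f (a \<otimes> h \<otimes> y \<otimes> inv h) (inv b) \<partial>M)"
    using a y b
    by (simp add: integrable_conj_avg_left[OF continuous_f _ continuous_map_conj])
  finally show ?thesis .
qed

lemma integrated_equation_right:
  assumes a: "a \<in> carrier G" and y: "y \<in> carrier G" and b: "b \<in> carrier G"
  shows "2 * f a * conj_avg f y b = (\<integral>k. conj_avg f a (y \<otimes> k \<otimes> b \<otimes> inv k) \<partial>M)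
    + \<mu> y * \<mu> b * (\<integral>k. conj_avg f a (k \<otimes> inv b \<otimes> inv k \<otimes> inv y) \<partial>M)"
proof -
  have "conj_avg f a (y \<otimes> k \<otimes> b \<otimes> inv k) + \<mu> y * \<mu> b * conj_avg f a (k \<otimes> inv b \<otimes> inv k \<otimes> inv y)
      = 2 * f a * f (y \<otimes> k \<otimes> b \<otimes> inv k)" if k: "k \<in> K" for k
  proof -
    have "\<mu> (y \<otimes> k \<otimes> b \<otimes> inv k) = \<mu> y * \<mu> b"
      using character_conj[OF character, of k b] y b k by (simp add: character_mult[OF character] group_simps)
    moreover have "inv (y \<otimes> k \<otimes> b \<otimes> inv k) = k \<otimes> inv b \<otimes> inv k \<otimes> inv y"
      using y b k by (simp add: group_simps)
    ultimately show ?thesis using equation[OF a, of "y \<otimes> k \<otimes> b \<otimes> inv k"] y b k by simp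
  qed
  then have "2 * f a * conj_avg f y b = (\<integral>k. conj_avg f a (y \<otimes> k \<otimes> b \<otimes> inv k)
      + \<mu> y * \<mu> b * conj_avg f a (k \<otimes> inv b \<otimes> inv k \<otimes> inv y) \<partial>M)"
    by (subst integral_mult_right_zero[symmetric], intro Bochner_Integration.integral_cong)
       (simp_all add: space_Haar)
  also have "\<dots> = (\<integral>k. conj_avg f a (y \<otimes> k \<otimes> b \<otimes> inv k) \<partial>M)
      + \<mu> y * \<mu> b * (\<integral>k. conj_avg f a (k \<otimes> inv b \<otimes> inv k \<otimes> inv y) \<partial>M)"
  proof -
    have "integrable M (\<lambda>k. conj_avg f a (k \<otimes> inv b \<otimes> inv k \<otimes> inv y))"
      using b y by (intro integrable_conj_avg_right[OF continuous_f a] continuous_map_group_intros) auto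
    then show ?thesis
      using integrable_conj_avg_right[OF continuous_f a continuous_map_conj[OF y b]] by simp
  qed
  finally show ?thesis .
qed

lemma deviation_equation:
  assumes x: "x \<in> carrier G" and y: "y \<in> carrier G" and z: "z \<in> carrier G"
  defines "fx \<equiv> \<lambda>w. conj_avg f x w - f x * f w"
  shows "conj_avg fx y z + conj_avg fx z y = 2 * fx y * f z + 2 * fx z * f y"
proof -
  define A1 where "A1 = (\<integral>k. conj_avg f x (y \<otimes> k \<otimes> z \<otimes> inv k) \<partial>M)"
  define A2 where "A2 = (\<integral>k. conj_avg f x (z \<otimes> k \<otimes> y \<otimes> inv k) \<partial>M)"
  define D1 where "D1 = (\<integral>k. conj_avg f x (y \<otimes> k \<otimes> inv z \<otimes> inv k) \<partial>M)"
  define D2 where "D2 = (\<integral>k. conj_avg f x (z \<otimes> k \<otimes> inv y \<otimes> inv k) \<partial>M)"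
  have fx_avg: "conj_avg fx a b = (\<integral>k. conj_avg f x (a \<otimes> k \<otimes> b \<otimes> inv k) \<partial>M) - f x * conj_avg f a b"
    if "a \<in> carrier G" "b \<in> carrier G" for a b
    unfolding fx_def using that x
    by (simp add: integrable_conj_avg_right[OF continuous_f x] continuous_map_conj
        integrable_continuous_comp[OF continuous_f] integral_mult_right_zero)
  have E1: "2 * conj_avg f x y * f z = A1 + \<mu> z * D1"
    using integrated_equation_left[OF x y z] conj_avg_iterated[OF continuous_f x y z]
      conj_avg_iterated[OF continuous_f x y inv_closed[OF z]]
    unfolding A1_def D1_def by simp
  have E2: "2 * conj_avg f x z * f y = A2 + \<mu> y * D2"
    using integrated_equation_left[OF x z y] conj_avg_iterated[OF continuous_f x z y]
      conj_avg_iterated[OF continuous_f x z inv_closed[OF y]]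
    unfolding A2_def D2_def by simp
  have E3: "2 * f x * conj_avg f y (inv z) = D1 + \<mu> y * \<mu> (inv z) * D2"
    using integrated_equation_right[OF x y inv_closed[OF z]]
      conj_avg_inverse_swap[OF continuous_f x z inv_closed[OF y]] z
    unfolding D1_def D2_def by simp
  have "4 * f x * f y * f z = 2 * f x * (conj_avg f y z + \<mu> z * conj_avg f y (inv z))"
    using equation[OF y z] by simp
  also have "\<dots> = 2 * f x * conj_avg f y z + \<mu> z * D1 + (\<mu> (inv z) * \<mu> z) * \<mu> y * D2"
    using E3 by (simp add: algebra_simps)
  finally have E4: "4 * f x * f y * f z = 2 * f x * conj_avg f y z + \<mu> z * D1 + \<mu> y * D2"
    using character_inv[OF character z] by simp
  have "conj_avg fx y z + conj_avg fx z y = A1 + A2 - 2 * f x * conj_avg f y z"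
    using fx_avg[OF y z] fx_avg[OF z y] conj_avg_sym[OF z y] unfolding A1_def A2_def by simp
  also have "\<dots> = 2 * fx y * f z + 2 * fx z * f y"
    unfolding fx_def using E1 E2 E4 by (simp add: algebra_simps)
  finally show ?thesis .
qed

end

theorem proposition3p3:
  fixes G :: "('a, 'b) monoid_scheme" and T :: "'a topology" and K :: "'a set"
    and M :: "'a measure" and \<mu> f :: "'a \<Rightarrow> complex"
  assumes G: "locally_compact_group G T"
    and K: "subgroup K G" "compactin T K"
    and M: "normalized_haar G T K M"
    and mu: "character G \<mu>" "continuous_map T euclidean \<mu>"
    and f_cont: "continuous_map T euclidean f"
    and f_nz: "\<exists>x\<in>carrier G. f x \<noteq> 0"
    and eq: "\<forall>x\<in>carrier G. \<forall>y\<in>carrier G.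
       (\<integral>k. f (x \<otimes>\<^bsub>G\<^esub> k \<otimes>\<^bsub>G\<^esub> y \<otimes>\<^bsub>G\<^esub> inv\<^bsub>G\<^esub> k) \<partial>M)
       + \<mu> y * (\<integral>k. f (x \<otimes>\<^bsub>G\<^esub> k \<otimes>\<^bsub>G\<^esub> inv\<^bsub>G\<^esub> y \<otimes>\<^bsub>G\<^esub> inv\<^bsub>G\<^esub> k) \<partial>M)
       = 2 * f x * f y"
  shows "f \<one>\<^bsub>G\<^esub> = 1 \<and> K_central G K f
    \<and> (\<forall>x\<in>carrier G. f x = \<mu> x * f (inv\<^bsub>G\<^esub> x))
    \<and> (\<forall>x\<in>carrier G. \<forall>y\<in>carrier G.
           (\<integral>k. f (x \<otimes>\<^bsub>G\<^esub> k \<otimes>\<^bsub>G\<^esub> y \<otimes>\<^bsub>G\<^esub> inv\<^bsub>G\<^esub> k) \<partial>M)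
         = (\<integral>k. f (y \<otimes>\<^bsub>G\<^esub> k \<otimes>\<^bsub>G\<^esub> x \<otimes>\<^bsub>G\<^esub> inv\<^bsub>G\<^esub> k) \<partial>M))
    \<and> (\<forall>x\<in>carrier G.
           (let fx = (\<lambda>y. (\<integral>k. f (x \<otimes>\<^bsub>G\<^esub> k \<otimes>\<^bsub>G\<^esub> y \<otimes>\<^bsub>G\<^esub> inv\<^bsub>G\<^esub> k) \<partial>M) - f x * f y)
            in \<forall>y\<in>carrier G. \<forall>z\<in>carrier G.
                 (\<integral>k. fx (y \<otimes>\<^bsub>G\<^esub> k \<otimes>\<^bsub>G\<^esub> z \<otimes>\<^bsub>G\<^esub> inv\<^bsub>G\<^esub> k) \<partial>M)
               + (\<integral>k. fx (z \<otimes>\<^bsub>G\<^esub> k \<otimes>\<^bsub>G\<^esub> y \<otimes>\<^bsub>G\<^esub> inv\<^bsub>G\<^esub> k) \<partial>M)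
               = 2 * fx y * f z + 2 * fx z * f y))"
proof -
  have "topological_group G T"
    using G unfolding locally_compact_group_def by (elim conjE)
  then have "group G" "topspace T = carrier G"
    "continuous_map (prod_topology T T) T (\<lambda>p. fst p \<otimes>\<^bsub>G\<^esub> snd p)"
    "continuous_map T T (\<lambda>x. inv\<^bsub>G\<^esub> x)"
    unfolding topological_group_def by simp_all
  then interpret K_dAlembert_equation G T K M \<mu> f
    using K M mu(1) f_cont f_nz eq
    by (intro K_dAlembert_equation.intro compact_subgroup_Haar.intro
        compact_subgroup_Haar_axioms.intro K_dAlembert_equation_axioms.intro) simp_all
  show ?thesis
    unfolding K_central_def Let_def
    using f_one f_K_central f_eq_character_mult_f_inv conj_avg_sym deviation_equation
    by (intro conjI ballI) blast+
qed

end
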